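(* Let $n\ge1$ and let $\lambda=(\lambda_1\ge\cdots\ge\lambda_n\ge0)$ be a partition with at most $n$ parts. Then $$P^{\mathbb L}_{\rho_{n-1}+\lambda}(x_1,\ldots,x_n|\mathbf b)=\Big(\prod_{1\le i<j\le n}(x_i+_Fx_j)\Big)s^{\mathbb L}_\lambda(x_1,\ldots,x_n|\mathbf b),\qquad Q^{\mathbb L}_{\rho_{n}+\lambda}(x_1,\ldots,x_n|\mathbf b)=\Big(\prod_{1\le i\le j\le n}(x_i+_Fx_j)\Big)s^{\mathbb L}_\lambda(x_1,\ldots,x_n|\mathbf b).$$ In particular (taking $\lambda=\emptyset$, $\mathbf b=0$), $P^{\mathbb L}_{\rho_{n-1}}(x_1,\ldots,x_n)=\prod_{i<j}(x_i+_Fx_j)\,s^{\mathbb L}_\emptyset(x_1,\ldots,x_n)$ and $Q^{\mathbb L}_{\rho_n}(x_1,\ldots,x_n)=\prod_{i\le j}(x_i+_Fx_j)\,s^{\mathbb L}_\emptyset(x_1,\ldots,x_n)$.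
   Context: Let $\mathbb L$ be the Lazard ring and $F(u,v)=\sum_{i,j}a_{i,j}u^iv^j$ the universal formal group law; $u+_Fv:=F(u,v)$, and $\bar u$ is the formal inverse ($u+_F\bar u=0$). $\mathbf b=(b_1,b_2,\ldots)$ are indeterminates; $[t|\mathbf b]^k=\prod_{i=1}^k(t+_Fb_i)$, $[[t|\mathbf b]]^{k}=(t+_Ft)[t|\mathbf b]^{k-1}$ for $k\ge1$, and $[t|\mathbf b]^0=[[t|\mathbf b]]^0=1$. For a sequence $\mu=(\mu_1,\dots,\mu_n)$ of nonnegative integers, $[x|\mathbf b]^\mu=\prod_i[x_i|\mathbf b]^{\mu_i}$, $[[x|\mathbf b]]^\mu=\prod_i[[x_i|\mathbf b]]^{\mu_i}$. For a strict partition $\lambda$ of length $r\le n$, $P^{\mathbb L}_\lambda(x_1,\ldots,x_n|\mathbf b)=\frac1{(n-r)!}\sum_{w\in S_n}w\big[[x|\mathbf b]^\lambda\prod_{i=1}^r\prod_{j=i+1}^n\frac{x_i+_Fx_j}{x_i+_F\bar x_j}\big]$ and $Q^{\mathbb L}_\lambda$ is defined identically with $[[x|\mathbf b]]^\lambda$ in place of $[x|\mathbf b]^\lambda$; the superscript-free versions are the specializations $\mathbf b=0$. Let $\rho_n=(n,n-1,\ldots,1)$ and $\rho_{n-1}=(n-1,\ldots,1,0)$ (as an $n$-tuple). For a partition $\lambda$ with at most $n$ parts, $$s^{\mathbb L}_\lambda(x_1,\ldots,x_n|\mathbf b)=\sum_{w\in S_n}w\Big[\frac{[x|\mathbf b]^{\lambda+\rho_{n-1}}}{\prod_{1\le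 i<j\le n}(x_i+_F\bar x_j)}\Big],\qquad s^{\mathbb L}_\lambda(x_1,\dots,x_n)=s^{\mathbb L}_\lambda(x_1,\dots,x_n|0).$$ *)

theory Defs
  imports "HOL-Combinatorics.Permutations"
begin

text \<open>The ambient ring is a field of characteristic 0
  (e.g. the fraction field of the power-series ring over the Lazard ring
  in which the paper's rational expressions live).  The formal group law
  sum  u +_F v  is a parameter  F :: 'a => 'a => 'a,  the formal inverse
  is a parameter  ib :: 'a => 'a.  Variables x_1..x_n are  x :: nat => 'a
  (indices 1..n), the parameters b_1, b_2, ... are  b :: nat => 'a.\<close>

definition entry :: "nat list \<Rightarrow> nat \<Rightarrow> nat" where
  "entry mu i = (if 1 \<le> i \<and> i \<le> length mu then mu ! (i - 1) else 0)"

text \<open>[t|b]^k = prod_{i=1}^k (t +_F b_i)\<close>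
definition fbr :: "('a::comm_ring_1 \<Rightarrow> 'a \<Rightarrow> 'a) \<Rightarrow> 'a \<Rightarrow> (nat \<Rightarrow> 'a) \<Rightarrow> nat \<Rightarrow> 'a" where
  "fbr F t b k = (\<Prod>i=1..k. F t (b i))"

text \<open>[[t|b]]^k = (t +_F t) [t|b]^(k-1) for k >= 1, and 1 for k = 0\<close>
definition fdbr :: "('a::comm_ring_1 \<Rightarrow> 'a \<Rightarrow> 'a) \<Rightarrow> 'a \<Rightarrow> (nat \<Rightarrow> 'a) \<Rightarrow> nat \<Rightarrow> 'a" where
  "fdbr F t b k = (if k = 0 then 1 else F t t * fbr F t b (k - 1))"

definition strict_partition :: "nat list \<Rightarrow> bool" where
  "strict_partition mu \<longleftrightarrow> sorted_wrt (>) mu \<and> (\<forall>a\<in>set mu. 0 < a)"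

definition partition :: "nat list \<Rightarrow> bool" where
  "partition lam \<longleftrightarrow> sorted_wrt (\<ge>) lam"

definition PQ_gen :: "('a::field_char_0 \<Rightarrow> 'a \<Rightarrow> 'a) \<Rightarrow> ('a \<Rightarrow> 'a) \<Rightarrow> nat \<Rightarrow> nat
     \<Rightarrow> (nat \<Rightarrow> 'a \<Rightarrow> 'a) \<Rightarrow> (nat \<Rightarrow> 'a) \<Rightarrow> 'a" where
  "PQ_gen F ib n r c x = (1 / of_nat (fact (n - r))) *
     (\<Sum>w\<in>{w. w permutes {1..n}}.
        (\<Prod>i=1..n. c i (x (w i))) *
        (\<Prod>i=1..r. \<Prod>j=i+1..n. F (x (w i)) (x (w j)) / F (x (w i)) (ib (x (w j)))))"

definition PL :: "('a::field_char_0 \<Rightarrow> 'a \<Rightarrow> 'a) \<Rightarrow> ('a \<Rightarrow> 'a) \<Rightarrow> nat \<Rightarrow> nat list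
     \<Rightarrow> (nat \<Rightarrow> 'a) \<Rightarrow> (nat \<Rightarrow> 'a) \<Rightarrow> 'a" where
  "PL F ib n mu b x = PQ_gen F ib n (length mu) (\<lambda>i t. fbr F t b (entry mu i)) x"

definition QL :: "('a::field_char_0 \<Rightarrow> 'a \<Rightarrow> 'a) \<Rightarrow> ('a \<Rightarrow> 'a) \<Rightarrow> nat \<Rightarrow> nat list
     \<Rightarrow> (nat \<Rightarrow> 'a) \<Rightarrow> (nat \<Rightarrow> 'a) \<Rightarrow> 'a" where
  "QL F ib n mu b x = PQ_gen F ib n (length mu) (\<lambda>i t. fdbr F t b (entry mu i)) x"

definition sL :: "('a::field_char_0 \<Rightarrow> 'a \<Rightarrow> 'a) \<Rightarrow> ('a \<Rightarrow> 'a) \<Rightarrow> nat \<Rightarrow> nat list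
     \<Rightarrow> (nat \<Rightarrow> 'a) \<Rightarrow> (nat \<Rightarrow> 'a) \<Rightarrow> 'a" where
  "sL F ib n lam b x = (\<Sum>w\<in>{w. w permutes {1..n}}.
      (\<Prod>i=1..n. fbr F (x (w i)) b (entry lam i + (n - i))) /
      (\<Prod>i=1..n. \<Prod>j=i+1..n. F (x (w i)) (ib (x (w j)))))"

text \<open>rho_{n-1} + lam as a strict partition (a possible trailing zero dropped)\<close>
definition rho1_plus :: "nat \<Rightarrow> nat list \<Rightarrow> nat list" where
  "rho1_plus n lam = filter (\<lambda>a. 0 < a) (map (\<lambda>i. (n - i) + entry lam i) [1..<n+1])"

definition rho_plus :: "nat \<Rightarrow> nat list \<Rightarrow> nat list" where
  "rho_plus n lam = map (\<lambda>i. (n + 1 - i) + entry lam i) [1..<n+1]"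

end

theory Submission
  imports Defs
begin

text \<open>Once the exponent sequence is \<open>\<rho> + \<lambda>\<close>, the pairs \<open>i \<le> r < j\<close> of the numerator product
  \<open>\<Prod> (x\<^sub>i +\<^sub>F x\<^sub>j)\<close> in the definition of \<open>P\<^sup>L\<close>, \<open>Q\<^sup>L\<close> exhaust all pairs \<open>i < j\<close>, because \<open>r \<ge> n - 1\<close>.
  As \<open>+\<^sub>F\<close> is commutative that product is symmetric in \<open>x\<close>, so it leaves the symmetrization
  as a constant factor, and what remains is the defining sum of \<open>s\<^sup>L\<^sub>\<lambda>\<close>.  For \<open>Q\<^sup>L\<close> the extra
  factors \<open>x\<^sub>i +\<^sub>F x\<^sub>i\<close> of \<open>[[x\<^sub>i|b]]\<close> form a symmetric product as well.\<close>

lemma prod_upper_pairs_conv_prod_set: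
  "(\<Prod>i=1..n. \<Prod>j=i+1..n. g i j) = (\<Prod>(i, j)\<in>{(i, j). 1 \<le> i \<and> i < j \<and> j \<le> (n::nat)}. g i j)"
proof -
  have "(\<Prod>i=1..n. \<Prod>j=i+1..n. g i j) = (\<Prod>(i, j)\<in>Sigma {1..n} (\<lambda>i. {i+1..n}). g i j)"
    by (rule prod.Sigma) auto
  also have "Sigma {1..n} (\<lambda>i. {i+1..n}) = {(i, j). 1 \<le> i \<and> i < j \<and> j \<le> n}"
    by auto
  finally show ?thesis .
qed

lemma prod_upper_pairs_permute:
  fixes G :: "nat \<Rightarrow> nat \<Rightarrow> 'a::comm_monoid_mult"
  assumes w: "w permutes {1..n}" and G_comm: "\<And>u v. G u v = G v u"
  shows "(\<Prod>i=1..n. \<Prod>j=i+1..n. G (w i) (w j)) = (\<Prod>i=1..n. \<Prod>j=i+1..n. G i j)"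
proof -
  define P where "P = {(i, j). 1 \<le> i \<and> i < j \<and> j \<le> n}"
  define f where "f = (\<lambda>(i, j). (min (w i) (w j), max (w i) (w j)))"
  have inj: "inj_on w {1..n}" and w_in: "\<And>i. i \<in> {1..n} \<Longrightarrow> w i \<in> {1..n}"
    using permutes_inj_on[OF w] permutes_in_image[OF w] by auto
  have "finite P"
    by (rule finite_subset[of _ "{1..n} \<times> {1..n}"]) (auto simp: P_def)
  moreover have "f ` P \<subseteq> P"
  proof (intro image_subsetI, clarify)
    fix i j assume "(i, j) \<in> P"
    then have "i \<in> {1..n}" "j \<in> {1..n}" "i \<noteq> j" by (auto simp: P_def)
    then have "w i \<noteq> w j" "w i \<in> {1..n}" "w j \<in> {1..n}"
      using inj w_in by (meson inj_onD)+
    then show "f (i, j) \<in> P" by (auto simp: f_def P_def)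
  qed
  moreover have "inj_on f P"
  proof (intro inj_onI, clarify)
    fix i j k l assume ij: "(i, j) \<in> P" and kl: "(k, l) \<in> P" and eq: "f (i, j) = f (k, l)"
    have "(w i = w k \<and> w j = w l) \<or> (w i = w l \<and> w j = w k)"
      using eq by (simp add: f_def min_def max_def split: if_splits; metis)
    with ij kl have "(i = k \<and> j = l) \<or> (i = l \<and> j = k)"
      by (auto simp: P_def dest: inj_onD[OF inj])
    with ij kl show "i = k \<and> j = l" by (auto simp: P_def)
  qed
  ultimately have "bij_betw f P P"
    by (simp add: bij_betw_def endo_inj_surj)
  then have "(\<Prod>(i, j)\<in>P. G i j) = (\<Prod>p\<in>P. (\<lambda>(i, j). G i j) (f p))"
    by (rule prod.reindex_bij_betw[symmetric])
  also have "\<dots> = (\<Prod>(i, j)\<in>P. G (w i) (w j))"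
    by (rule prod.cong) (auto simp: f_def min_def max_def G_comm)
  finally show ?thesis
    unfolding prod_upper_pairs_conv_prod_set P_def by (rule sym)
qed

lemma prod_upper_pairs_drop_last_row:
  "(\<Prod>i=1..n - 1. \<Prod>j=i+1..n. g i j) = (\<Prod>i=1..n. \<Prod>j=i+1..(n::nat). g i j)"
  by (cases n) (simp_all add: prod.cl_ivl_Suc)

lemma PQ_gen_eq_sym_factor_sL:
  fixes F :: "'a::field_char_0 \<Rightarrow> 'a \<Rightarrow> 'a" and K :: "'a \<Rightarrow> 'a"
  assumes F_comm: "\<And>u v. F u v = F v u" and n: "1 \<le> n" and r: "r = n \<or> r = n - 1"
    and c: "\<And>i t. i \<in> {1..n} \<Longrightarrow> c i t = K t * fbr F t b (entry lam i + (n - i))"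
  shows "PQ_gen F ib n r c x
    = (\<Prod>i=1..n. K (x i)) * (\<Prod>i=1..n. \<Prod>j=i+1..n. F (x i) (x j)) * sL F ib n lam b x"
proof -
  define K\<^sub>x where "K\<^sub>x = (\<Prod>i=1..n. K (x i))"
  define S where "S = (\<Prod>i=1..n. \<Prod>j=i+1..n. F (x i) (x j))"
  have rows: "(\<Prod>i=1..r. \<Prod>j=i+1..n. g i j) = (\<Prod>i=1..n. \<Prod>j=i+1..n. g i j)"
    for g :: "nat \<Rightarrow> nat \<Rightarrow> 'a"
    using r prod_upper_pairs_drop_last_row[where n=n and g=g] by auto
  have term_eq: "(\<Prod>i=1..n. c i (x (w i))) *
        (\<Prod>i=1..r. \<Prod>j=i+1..n. F (x (w i)) (x (w j)) / F (x (w i)) (ib (x (w j))))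
      = K\<^sub>x * S * ((\<Prod>i=1..n. fbr F (x (w i)) b (entry lam i + (n - i))) /
          (\<Prod>i=1..n. \<Prod>j=i+1..n. F (x (w i)) (ib (x (w j)))))"
    if w: "w permutes {1..n}" for w
  proof -
    have "(\<Prod>i=1..n. K (x (w i))) = K\<^sub>x"
      using prod.permute[OF w, of "\<lambda>i. K (x i)"] by (simp add: K\<^sub>x_def o_def)
    then have weights: "(\<Prod>i=1..n. c i (x (w i)))
        = K\<^sub>x * (\<Prod>i=1..n. fbr F (x (w i)) b (entry lam i + (n - i)))"
      by (simp add: c prod.distrib)
    have pairs: "(\<Prod>i=1..r. \<Prod>j=i+1..n. F (x (w i)) (x (w j)) / F (x (w i)) (ib (x (w j))))
        = S / (\<Prod>i=1..n. \<Prod>j=i+1..n. F (x (w i)) (ib (x (w j))))"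
      unfolding prod_dividef rows S_def
      using prod_upper_pairs_permute[OF w, of "\<lambda>i j. F (x i) (x j)"] F_comm by simp
    show ?thesis
      unfolding weights pairs by (simp add: algebra_simps)
  qed
  have no_normalization: "1 / of_nat (fact (n - r)) = (1::'a)"
    using r n by auto
  show ?thesis
    unfolding PQ_gen_def sL_def no_normalization mult_1_left sum_distrib_left
      K\<^sub>x_def[symmetric] S_def[symmetric]
    by (rule sum.cong[OF refl]) (use term_eq in blast)
qed

lemma rho1_plus_eq:
  assumes "1 \<le> n"
  shows "rho1_plus n lam = map (\<lambda>i. (n - i) + entry lam i) [1..<n] @
           (if 0 < entry lam n then [entry lam n] else [])"
proof -
  have "[1..<n+1] = [1..<n] @ [n]"
    using assms by simp
  moreover have "filter (\<lambda>a. 0 < a) (map (\<lambda>i. (n - i) + entry lam i) [1..<n])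
      = map (\<lambda>i. (n - i) + entry lam i) [1..<n]"
    by (rule filter_True) auto
  ultimately show ?thesis
    by (simp add: rho1_plus_def)
qed

lemma length_rho1_plus:
  "1 \<le> n \<Longrightarrow> length (rho1_plus n lam) = n \<or> length (rho1_plus n lam) = n - 1"
  by (auto simp: rho1_plus_eq)

text \<open>The possibly dropped last part is zero, which is also the padding value of \<^const>\<open>entry\<close>.\<close>
lemma entry_rho1_plus:
  assumes "1 \<le> n" and "i \<in> {1..n}"
  shows "entry (rho1_plus n lam) i = entry lam i + (n - i)"
  using assms by (cases "i < n") (auto simp: rho1_plus_eq entry_def nth_append)

lemma entry_rho_plus:
  "i \<in> {1..n} \<Longrightarrow> entry (rho_plus n lam) i = Suc (entry lam i + (n - i))"
  by (auto simp: rho_plus_def entry_def simp del: upt_Suc)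

lemma PL_rho1_plus:
  fixes F :: "'a::field_char_0 \<Rightarrow> 'a \<Rightarrow> 'a"
  assumes F_comm: "\<And>u v. F u v = F v u" and n: "1 \<le> n"
  shows "PL F ib n (rho1_plus n lam) b x
    = (\<Prod>i=1..n. \<Prod>j=i+1..n. F (x i) (x j)) * sL F ib n lam b x"
  using PQ_gen_eq_sym_factor_sL[where F=F, OF F_comm n length_rho1_plus[OF n],
      where c="\<lambda>i t. fbr F t b (entry (rho1_plus n lam) i)" and K="\<lambda>_. 1" and b=b and lam=lam
      and ib=ib and x=x]
  by (simp add: PL_def entry_rho1_plus[OF n])

lemma QL_rho_plus:
  fixes F :: "'a::field_char_0 \<Rightarrow> 'a \<Rightarrow> 'a"
  assumes F_comm: "\<And>u v. F u v = F v u" and n: "1 \<le> n"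
  shows "QL F ib n (rho_plus n lam) b x
    = (\<Prod>i=1..n. \<Prod>j=i..n. F (x i) (x j)) * sL F ib n lam b x"
proof -
  have diagonal: "(\<Prod>i=1..n. \<Prod>j=i..n. F (x i) (x j))
      = (\<Prod>i=1..n. F (x i) (x i)) * (\<Prod>i=1..n. \<Prod>j=i+1..n. F (x i) (x j))"
    unfolding prod.distrib[symmetric] by (simp add: prod.atLeast_Suc_atMost)
  have "length (rho_plus n lam) = n"
    by (simp add: rho_plus_def)
  then show ?thesis
    using PQ_gen_eq_sym_factor_sL[where F=F, OF F_comm n, where r="length (rho_plus n lam)"
        and c="\<lambda>i t. fdbr F t b (entry (rho_plus n lam) i)" and K="\<lambda>t. F t t" and b=b and lam=lam
        and ib=ib and x=x]
    unfolding QL_def diagonal by (simp add: entry_rho_plus fdbr_def)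
qed

theorem mainTheorem2:
  fixes F :: "'a::field_char_0 \<Rightarrow> 'a \<Rightarrow> 'a" and ib :: "'a \<Rightarrow> 'a"
    and n :: nat and lam :: "nat list" and b x :: "nat \<Rightarrow> 'a"
  assumes F_comm: "\<And>u v. F u v = F v u"
    and n: "1 \<le> n"
    and lam: "partition lam" "length lam \<le> n"
  shows "PL F ib n (rho1_plus n lam) b x
           = (\<Prod>i=1..n. \<Prod>j=i+1..n. F (x i) (x j)) * sL F ib n lam b x
         \<and> QL F ib n (rho_plus n lam) b x
           = (\<Prod>i=1..n. \<Prod>j=i..n. F (x i) (x j)) * sL F ib n lam b x
         \<and> PL F ib n (rho1_plus n []) (\<lambda>_. 0) x
           = (\<Prod>i=1..n. \<Prod>j=i+1..n. F (x i) (x j)) * sL F ib n [] (\<lambda>_. 0) x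
         \<and> QL F ib n (rho_plus n []) (\<lambda>_. 0) x
           = (\<Prod>i=1..n. \<Prod>j=i..n. F (x i) (x j)) * sL F ib n [] (\<lambda>_. 0) x"
  using PL_rho1_plus[where F=F, OF F_comm n] QL_rho_plus[where F=F, OF F_comm n] by blast

end
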